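(* For every $k\ge0$, every $n$-vertex graph of clique-width at most $k$ has a partial orientation $\vec{H}$ of maximum outdegree $O(k\log n)$ that is a weak $\infty$-guidance system.
   Context: All graphs are finite, simple and undirected. A partial orientation of $G$ is a directed graph $\vec{H}$ on $V(G)$ with every $(u,v)\in E(\vec{H})$ satisfying $uv\in E(G)$. $B_{\vec{H}}(v,a)$ is the set of vertices reachable from $v$ by a directed path of length at most $a$. A weak $r$-guidance system is a partial orientation $\vec{H}$ such that for any distinct $u,v$ at distance $\ell\le r$ in $G$ there exist non-negative integers $a,b$ with $a+b=\ell-1$ such that $G$ has an edge between $B_{\vec{H}}(u,a)$ and $B_{\vec{H}}(v,b)$; a weak $\infty$-guidance system is one that is a weak $r$-guidance system for every positive integer $r$. A $k$-labeled graph is a graph with each vertex labeled from $[k]$. Constructible $k$-labeled graphs are the smallest family containing all one-vertex $k$-labeled graphs and closed under disjoint unions, relabeling all vertices of label $i$ to label $j$, and adding all edges between vertices of labels $i$ and $j$. A graph has clique-width at most $k$ if its vertices can be labeled so that the resulting $k$-labeled graph is constructible. The $O(\cdot)$ hides an absolute constant. *)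

theory Defs
  imports Main "HOL-Library.Disjoint_Sets" Complex_Main
begin

definition simple_graph :: "'a set \<Rightarrow> ('a \<times> 'a) set \<Rightarrow> bool" where
  "simple_graph V E \<longleftrightarrow> finite V \<and> E \<subseteq> V \<times> V \<and> sym E \<and> irrefl E"

definition partial_orientation :: "('a \<times> 'a) set \<Rightarrow> ('a \<times> 'a) set \<Rightarrow> bool" where
  "partial_orientation E H \<longleftrightarrow> H \<subseteq> E"

definition outdeg :: "('a \<times> 'a) set \<Rightarrow> 'a \<Rightarrow> nat" where
  "outdeg H u = card {v. (u, v) \<in> H}"

definition out_ball :: "('a \<times> 'a) set \<Rightarrow> 'a \<Rightarrow> nat \<Rightarrow> 'a set" where
  "out_ball H v a = {w. \<exists>i\<le>a. (v, w) \<in> H ^^ i}"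

definition at_dist :: "('a \<times> 'a) set \<Rightarrow> 'a \<Rightarrow> 'a \<Rightarrow> nat \<Rightarrow> bool" where
  "at_dist E u v l \<longleftrightarrow> (u, v) \<in> E ^^ l \<and> (\<forall>m<l. (u, v) \<notin> E ^^ m)"

definition weak_guidance :: "'a set \<Rightarrow> ('a \<times> 'a) set \<Rightarrow> nat \<Rightarrow> ('a \<times> 'a) set \<Rightarrow> bool" where
  "weak_guidance V E r H \<longleftrightarrow> partial_orientation E H \<and>
     (\<forall>u\<in>V. \<forall>v\<in>V. \<forall>l. u \<noteq> v \<and> at_dist E u v l \<and> l \<le> r \<longrightarrow>
        (\<exists>a b. a + b = l - 1 \<and>
           (\<exists>x\<in>out_ball H u a. \<exists>y\<in>out_ball H v b. (x, y) \<in> E)))"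

definition weak_inf_guidance :: "'a set \<Rightarrow> ('a \<times> 'a) set \<Rightarrow> ('a \<times> 'a) set \<Rightarrow> bool" where
  "weak_inf_guidance V E H \<longleftrightarrow> (\<forall>r::nat. r \<ge> 1 \<longrightarrow> weak_guidance V E r H)"

text \<open>Constructible k-labeled graphs (V, E, lab), labels in {1..k};
  only the values of lab on V are relevant.\<close>
inductive cw_constructible :: "nat \<Rightarrow> 'a set \<Rightarrow> ('a \<times> 'a) set \<Rightarrow> ('a \<Rightarrow> nat) \<Rightarrow> bool"
  for k :: nat where
  single: "lab x \<in> {1..k} \<Longrightarrow> cw_constructible k {x} {} lab"
| union: "\<lbrakk>cw_constructible k V1 E1 lab1; cw_constructible k V2 E2 lab2; V1 \<inter> V2 = {}\<rbrakk>
     \<Longrightarrow> cw_constructible k (V1 \<union> V2) (E1 \<union> E2) (\<lambda>x. if x \<in> V1 then lab1 x else lab2 x)"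
| relabel: "\<lbrakk>cw_constructible k V E lab; i \<in> {1..k}; j \<in> {1..k}\<rbrakk>
     \<Longrightarrow> cw_constructible k V E (\<lambda>x. if lab x = i then j else lab x)"
| join: "\<lbrakk>cw_constructible k V E lab; i \<in> {1..k}; j \<in> {1..k}; i \<noteq> j\<rbrakk>
     \<Longrightarrow> cw_constructible k V
          (E \<union> {(x, y). x \<in> V \<and> y \<in> V \<and>
                 ((lab x = i \<and> lab y = j) \<or> (lab x = j \<and> lab y = i))}) lab"

definition cw_at_most :: "nat \<Rightarrow> 'a set \<Rightarrow> ('a \<times> 'a) set \<Rightarrow> bool" where
  "cw_at_most k V E \<longleftrightarrow> (\<exists>lab. cw_constructible k V E lab)"

end

theory Submission
  imports Defs
begin

(* A clique-width expression of width k provides a family of vertex sets X (the vertex sets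
   of its subexpressions) such that every X falls into at most k classes of twins with respect
   to the rest of the graph, and every vertex set W is split in a balanced way by some X:
   between a third and two thirds of W lies in X.  Split W accordingly, recurse on both
   sides, and for every twin class C of W \<inter> X add a BFS forest towards C and one towards the
   common neighbours of C outside X.  A walk from u to v inside W either stays on one side,
   where the recursion applies, or uses an edge xy from the class C of x to the outside;
   then y is a common neighbour of C, the forests lead from u into C and from v to the
   common neighbours of C within the lengths of the two parts of the walk, and the two
   endpoints reached are adjacent.  Each level adds out-degree at most 2k, and there are at
   most log_{3/2} n levels. *)

lemma relpow_sym:
  assumes "sym R" "(x, y) \<in> R ^^ n"
  shows "(y, x) \<in> R ^^ n"
  using assms(2)
proof (induction n arbitrary: y)
  case 0
  then show ?case by simp
next
  case (Suc n)
  then obtain z where "(x, z) \<in> R ^^ n" "(z, y) \<in> R" by auto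
  with Suc.IH show ?case by (meson assms(1) relpow_Suc_I2 symD)
qed

lemma relpow_cut:
  assumes "(u, v) \<in> R ^^ l"
  shows "(u, v) \<in> Restr R A ^^ l \<and> v \<in> A
    \<or> (u, v) \<in> Restr R (-A) ^^ l \<and> v \<notin> A
    \<or> (\<exists>x y p q. (u, x) \<in> R ^^ p \<and> (x, y) \<in> R \<and> (y, v) \<in> R ^^ q \<and> p + q + 1 = l
         \<and> (x \<in> A \<longleftrightarrow> y \<notin> A))"
  using assms
proof (induction l arbitrary: v)
  case 0
  then show ?case by auto
next
  case (Suc l)
  then obtain w where uw: "(u, w) \<in> R ^^ l" and wv: "(w, v) \<in> R" by auto
  from Suc.IH[OF uw] show ?case
  proof (elim disjE conjE exE)
    fix x y p q
    assume "(u, x) \<in> R ^^ p" "(x, y) \<in> R" "(y, w) \<in> R ^^ q" "p + q + 1 = l"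
      "x \<in> A \<longleftrightarrow> y \<notin> A"
    moreover have "(y, v) \<in> R ^^ Suc q" using \<open>(y, w) \<in> R ^^ q\<close> wv by auto
    ultimately show ?thesis
      by (intro disjI2 exI[of _ x] exI[of _ y] exI[of _ p] exI[of _ "Suc q"]) auto
  qed (use uw wv in \<open>(cases "v \<in> A"; force intro!: exI[of _ l] exI[of _ 0])+\<close>)
qed

lemma out_ball_mono:
  assumes "H \<subseteq> H'" "a \<le> a'" "x \<in> out_ball H u a"
  shows "x \<in> out_ball H' u a'"
proof -
  from assms(3) obtain i where "i \<le> a" "(u, x) \<in> H ^^ i" unfolding out_ball_def by blast
  with assms(1,2) show ?thesis
    unfolding out_ball_def by (blast intro: relpowp_mono[to_set] order_trans)
qed

lemma outdeg_Un_le: "outdeg (H \<union> H') w \<le> outdeg H w + outdeg H' w"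
proof -
  have "{v. (w, v) \<in> H \<union> H'} = {v. (w, v) \<in> H} \<union> {v. (w, v) \<in> H'}" by blast
  then show ?thesis unfolding outdeg_def by (metis card_Un_le)
qed

lemma outdeg_UN_le:
  assumes "finite J"
  shows "outdeg (\<Union>j\<in>J. F j) w \<le> (\<Sum>j\<in>J. outdeg (F j) w)"
proof -
  have "{v. (w, v) \<in> (\<Union>j\<in>J. F j)} = (\<Union>j\<in>J. {v. (w, v) \<in> F j})" by blast
  with card_UN_le[OF assms] show ?thesis unfolding outdeg_def by metis
qed

lemma outdeg_Un_cut:
  assumes "HA \<subseteq> A \<times> A" "HB \<subseteq> (-A) \<times> (-A)"
  shows "outdeg (HA \<union> HB) w \<le> max (outdeg HA w) (outdeg HB w)"
proof (cases "w \<in> A")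
  case True
  with assms have "{v. (w, v) \<in> HA \<union> HB} = {v. (w, v) \<in> HA}" by blast
  then show ?thesis unfolding outdeg_def by simp
next
  case False
  with assms have "{v. (w, v) \<in> HA \<union> HB} = {v. (w, v) \<in> HB}" by blast
  then show ?thesis unfolding outdeg_def by simp
qed

definition guides_to :: "('a \<times> 'a) set \<Rightarrow> ('a \<times> 'a) set \<Rightarrow> 'a set \<Rightarrow> bool" where
  "guides_to R H S \<longleftrightarrow> (\<forall>w s n. (w, s) \<in> R ^^ n \<and> s \<in> S \<longrightarrow> (\<exists>t\<in>S. t \<in> out_ball H w n))"

lemma guides_to_mono: "guides_to R H S \<Longrightarrow> H \<subseteq> H' \<Longrightarrow> guides_to R H' S"
  unfolding guides_to_def by (meson order_refl out_ball_mono)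

definition dist_to :: "('a \<times> 'a) set \<Rightarrow> 'a set \<Rightarrow> 'a \<Rightarrow> nat" where
  "dist_to R S w = (LEAST n. \<exists>s\<in>S. (w, s) \<in> R ^^ n)"

lemma closer_neighbour_exists:
  assumes "(w, s) \<in> R ^^ n" "s \<in> S" "w \<notin> S"
  shows "dist_to R S w - 1 < n \<and> (\<exists>w'. (w, w') \<in> R \<and> (\<exists>t\<in>S. (w', t) \<in> R ^^ (dist_to R S w - 1)))"
proof -
  have "\<exists>t\<in>S. (w, t) \<in> R ^^ dist_to R S w"
    unfolding dist_to_def by (rule LeastI[of _ n]) (use assms in blast)
  then obtain t where t: "t \<in> S" "(w, t) \<in> R ^^ dist_to R S w" by blast
  with assms(3) obtain d where d: "dist_to R S w = Suc d"
    by (cases "dist_to R S w") auto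
  with t obtain w' where "(w, w') \<in> R" "(w', t) \<in> R ^^ d"
    by (metis relpow_Suc_D2)
  moreover have "dist_to R S w \<le> n"
    unfolding dist_to_def by (rule Least_le) (use assms in blast)
  ultimately show ?thesis using t(1) d by auto
qed

lemma guides_to_descending:
  assumes descend: "\<And>w s n. (w, s) \<in> R ^^ n \<Longrightarrow> s \<in> S \<Longrightarrow> w \<notin> S \<Longrightarrow>
      \<exists>w'. (w, w') \<in> F \<and> (\<exists>t\<in>S. (w', t) \<in> R ^^ (dist_to R S w - 1))"
  shows "guides_to R F S"
proof -
  have "\<exists>t\<in>S. t \<in> out_ball F w n" if "(w, s) \<in> R ^^ n" "s \<in> S" for w s n
    using that
  proof (induction n arbitrary: w s rule: less_induct)
    case (less n)
    show ?case
    proof (cases "w \<in> S")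
      case True
      then show ?thesis unfolding out_ball_def by force
    next
      case False
      from descend[OF less.prems False] obtain w' t where
        w': "(w, w') \<in> F" "t \<in> S" "(w', t) \<in> R ^^ (dist_to R S w - 1)" by blast
      from closer_neighbour_exists[OF less.prems False]
      have closer: "dist_to R S w - 1 < n" by blast
      from less.IH[OF closer w'(3,2)] obtain t' i where
        "t' \<in> S" "i \<le> dist_to R S w - 1" "(w', t') \<in> F ^^ i"
        unfolding out_ball_def by blast
      moreover from w'(1) \<open>(w', t') \<in> F ^^ i\<close> have "(w, t') \<in> F ^^ Suc i"
        by (rule relpow_Suc_I2)
      moreover from closer \<open>i \<le> dist_to R S w - 1\<close> have "Suc i \<le> n" by linarith
      ultimately show ?thesis unfolding out_ball_def by blast
    qed
  qed
  then show ?thesis unfolding guides_to_def by blast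
qed

lemma bfs_forest_exists: "\<exists>F \<subseteq> R. (\<forall>w. outdeg F w \<le> 1) \<and> guides_to R F S"
proof -
  let ?reaches = "\<lambda>w. \<exists>n. \<exists>s\<in>S. (w, s) \<in> R ^^ n"
  have "\<exists>w'. (w, w') \<in> R \<and> (\<exists>t\<in>S. (w', t) \<in> R ^^ (dist_to R S w - 1))"
    if "w \<notin> S" "?reaches w" for w
    using that closer_neighbour_exists by meson
  then obtain f where f: "\<And>w. w \<notin> S \<Longrightarrow> ?reaches w \<Longrightarrow>
      (w, f w) \<in> R \<and> (\<exists>t\<in>S. (f w, t) \<in> R ^^ (dist_to R S w - 1))"
    by (metis (lifting))
  define F where "F = {(w, f w) | w. w \<notin> S \<and> ?reaches w}"
  have "F \<subseteq> R" unfolding F_def using f by blast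
  moreover have "outdeg F w \<le> 1" for w
  proof -
    have "{v. (w, v) \<in> F} \<subseteq> {f w}" unfolding F_def by blast
    from card_mono[OF _ this] show ?thesis unfolding outdeg_def by simp
  qed
  moreover have "guides_to R F S"
  proof (rule guides_to_descending)
    fix w s n
    assume "(w, s) \<in> R ^^ n" "s \<in> S" "w \<notin> S"
    then have "(w, f w) \<in> F" "\<exists>t\<in>S. (f w, t) \<in> R ^^ (dist_to R S w - 1)"
      using f unfolding F_def by blast+
    then show "\<exists>w'. (w, w') \<in> F \<and> (\<exists>t\<in>S. (w', t) \<in> R ^^ (dist_to R S w - 1))" by blast
  qed
  ultimately show ?thesis by blast
qed

lemma outdeg_UN_forests:
  assumes "finite J" "\<And>S w. outdeg (T S) w \<le> 1"
  shows "outdeg (\<Union>j\<in>J. T (P j) \<union> T (Q j)) w \<le> 2 * card J"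
proof -
  have "outdeg (\<Union>j\<in>J. T (P j) \<union> T (Q j)) w \<le> (\<Sum>j\<in>J. outdeg (T (P j)) w + outdeg (T (Q j)) w)"
    by (rule order_trans[OF outdeg_UN_le[OF assms(1)]]) (intro sum_mono outdeg_Un_le)
  also have "\<dots> \<le> (\<Sum>j\<in>J. 2)"
  proof (rule sum_mono)
    fix j
    show "outdeg (T (P j)) w + outdeg (T (Q j)) w \<le> 2"
      using assms(2)[of "P j" w] assms(2)[of "Q j" w] by linarith
  qed
  finally show ?thesis by simp
qed

text \<open>Unlike a weak guidance system, this asks for guidance along every walk, not only
  along shortest paths; this is what survives restriction to the two sides of a cut.\<close>

definition walk_guidance :: "('a \<times> 'a) set \<Rightarrow> ('a \<times> 'a) set \<Rightarrow> bool" where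
  "walk_guidance R H \<longleftrightarrow> (\<forall>u v l. (u, v) \<in> R ^^ Suc l \<longrightarrow>
     (\<exists>a b. a + b = l \<and> (\<exists>x\<in>out_ball H u a. \<exists>y\<in>out_ball H v b. (x, y) \<in> R)))"

lemma walk_guidance_mono: "walk_guidance R H \<Longrightarrow> H \<subseteq> H' \<Longrightarrow> walk_guidance R H'"
  unfolding walk_guidance_def by (meson order_refl out_ball_mono)

lemma walk_guidance_empty: "walk_guidance {} H"
  unfolding walk_guidance_def by (simp add: relpow_empty)

lemma walk_guidance_imp_weak_inf_guidance:
  assumes "H \<subseteq> E" "walk_guidance E H"
  shows "weak_inf_guidance V E H"
  unfolding weak_inf_guidance_def weak_guidance_def partial_orientation_def
proof (intro allI impI conjI ballI assms(1))
  fix r u v l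
  assume "u \<noteq> v \<and> at_dist E u v l \<and> l \<le> r"
  then obtain l' where "(u, v) \<in> E ^^ Suc l'" "l = Suc l'"
    unfolding at_dist_def by (cases l) auto
  with assms(2) show "\<exists>a b. a + b = l - 1 \<and> (\<exists>x\<in>out_ball H u a. \<exists>y\<in>out_ball H v b. (x, y) \<in> E)"
    unfolding walk_guidance_def by simp
qed

definition twin_colouring :: "('a \<times> 'a) set \<Rightarrow> 'a set \<Rightarrow> ('a \<Rightarrow> 'b) \<Rightarrow> bool" where
  "twin_colouring E X c \<longleftrightarrow>
     (\<forall>x\<in>X. \<forall>x'\<in>X. c x = c x' \<longrightarrow> (\<forall>y. y \<notin> X \<longrightarrow> ((x, y) \<in> E \<longleftrightarrow> (x', y) \<in> E)))"

lemma twin_colouringD: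
  "twin_colouring E X c \<Longrightarrow> x \<in> X \<Longrightarrow> x' \<in> X \<Longrightarrow> c x = c x' \<Longrightarrow> y \<notin> X \<Longrightarrow>
     (x, y) \<in> E \<longleftrightarrow> (x', y) \<in> E"
  unfolding twin_colouring_def by blast

lemma twin_colouring_Un:
  assumes "twin_colouring E X c" "twin_colouring E' X c"
  shows "twin_colouring (E \<union> E') X c"
  unfolding twin_colouring_def
proof (intro ballI impI allI)
  fix x x' y
  assume "x \<in> X" "x' \<in> X" "c x = c x'" "y \<notin> X"
  with twin_colouringD[OF assms(1)] twin_colouringD[OF assms(2)]
  show "(x, y) \<in> E \<union> E' \<longleftrightarrow> (x', y) \<in> E \<union> E'" by blast
qed

lemma twin_colouring_restrict:
  "twin_colouring E X c \<Longrightarrow> twin_colouring (Restr E W) (W \<inter> X) c"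
  unfolding twin_colouring_def by blast

definition colour_class :: "'a set \<Rightarrow> ('a \<Rightarrow> 'b) \<Rightarrow> 'b \<Rightarrow> 'a set" where
  "colour_class X c j = {x \<in> X. c x = j}"

definition common_neighbours :: "('a \<times> 'a) set \<Rightarrow> 'a set \<Rightarrow> 'a set" where
  "common_neighbours R S = {y. \<forall>x\<in>S. (x, y) \<in> R}"

lemma guided_across_cut:
  assumes twins: "twin_colouring R A c"
    and walks: "(u, x) \<in> R ^^ p" "(x, y) \<in> R" "(v, y) \<in> R ^^ q" and cut: "x \<in> A" "y \<notin> A"
    and guides: "guides_to R H (colour_class A c (c x))"
      "guides_to R H (common_neighbours R (colour_class A c (c x)) - A)"
  shows "\<exists>s\<in>out_ball H u p. \<exists>t\<in>out_ball H v q. (s, t) \<in> R"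
proof -
  have "y \<in> common_neighbours R (colour_class A c (c x)) - A"
    using twins walks(2) cut
    unfolding common_neighbours_def colour_class_def twin_colouring_def by blast
  moreover have "x \<in> colour_class A c (c x)" using cut(1) unfolding colour_class_def by blast
  ultimately obtain s t where "s \<in> colour_class A c (c x)" "s \<in> out_ball H u p"
      "t \<in> common_neighbours R (colour_class A c (c x))" "t \<in> out_ball H v q"
    using guides walks(1,3) unfolding guides_to_def by blast
  then show ?thesis unfolding common_neighbours_def by blast
qed

lemma walk_guidance_cut:
  assumes "sym R" "twin_colouring R A c"
    and inside: "walk_guidance (Restr R A) H" and outside: "walk_guidance (Restr R (-A)) H"
    and guides: "\<And>j. j \<in> c ` A \<Longrightarrow> guides_to R H (colour_class A c j)"
      "\<And>j. j \<in> c ` A \<Longrightarrow> guides_to R H (common_neighbours R (colour_class A c j) - A)"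
  shows "walk_guidance R H"
  unfolding walk_guidance_def
proof (intro allI impI)
  fix u v l
  assume "(u, v) \<in> R ^^ Suc l"
  from relpow_cut[OF this, of A]
  show "\<exists>a b. a + b = l \<and> (\<exists>x\<in>out_ball H u a. \<exists>y\<in>out_ball H v b. (x, y) \<in> R)"
  proof (elim disjE conjE exE)
    fix x y p q
    assume walks: "(u, x) \<in> R ^^ p" "(x, y) \<in> R" "(y, v) \<in> R ^^ q" "p + q + 1 = Suc l"
      and crossing: "x \<in> A \<longleftrightarrow> y \<notin> A"
    have "\<exists>s\<in>out_ball H u p. \<exists>t\<in>out_ball H v q. (s, t) \<in> R"
    proof (cases "x \<in> A")
      case True
      with crossing guides[OF imageI[OF True]] show ?thesis
        using guided_across_cut[OF assms(2) walks(1,2) relpow_sym[OF assms(1) walks(3)]] by blast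
    next
      case False
      with crossing have "y \<in> A" by blast
      with False guides[OF imageI[OF this]]
      have "\<exists>t\<in>out_ball H v q. \<exists>s\<in>out_ball H u p. (t, s) \<in> R"
        using guided_across_cut[OF assms(2) relpow_sym[OF assms(1) walks(3)]
            symD[OF assms(1) walks(2)] walks(1)] by blast
      then show ?thesis using symD[OF assms(1)] by blast
    qed
    then show ?thesis using walks(4) by (intro exI[of _ p] exI[of _ q]) simp
  next
    assume "(u, v) \<in> Restr R A ^^ Suc l"
    with inside show ?thesis unfolding walk_guidance_def by blast
  next
    assume "(u, v) \<in> Restr R (-A) ^^ Suc l"
    with outside show ?thesis unfolding walk_guidance_def by blast
  qed
qed

lemma walk_guidance_combine:
  assumes "sym R" "twin_colouring R A c" "finite (c ` A)"
    and HA: "HA \<subseteq> Restr R A" "walk_guidance (Restr R A) HA"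
    and HB: "HB \<subseteq> Restr R (-A)" "walk_guidance (Restr R (-A)) HB"
  shows "\<exists>H \<subseteq> R. (\<forall>w. outdeg H w \<le> max (outdeg HA w) (outdeg HB w) + 2 * card (c ` A))
    \<and> walk_guidance R H"
proof -
  have "\<forall>S. \<exists>F. F \<subseteq> R \<and> (\<forall>w. outdeg F w \<le> 1) \<and> guides_to R F S"
    using bfs_forest_exists by blast
  then obtain T where "\<forall>S. T S \<subseteq> R \<and> (\<forall>w. outdeg (T S) w \<le> 1) \<and> guides_to R (T S) S"
    by (rule choice[THEN exE])
  then have T: "\<And>S. T S \<subseteq> R" "\<And>S w. outdeg (T S) w \<le> 1" "\<And>S. guides_to R (T S) S"
    by blast+
  define HF where
    "HF = (\<Union>j\<in>c ` A. T (colour_class A c j) \<union> T (common_neighbours R (colour_class A c j) - A))"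
  define H where "H = HA \<union> HB \<union> HF"
  have "H \<subseteq> R" unfolding H_def HF_def using HA(1) HB(1) T(1) by blast
  moreover have "outdeg H w \<le> max (outdeg HA w) (outdeg HB w) + 2 * card (c ` A)" for w
  proof -
    have "outdeg HF w \<le> 2 * card (c ` A)"
      unfolding HF_def using assms(3) T(2) by (rule outdeg_UN_forests)
    moreover have "outdeg (HA \<union> HB) w \<le> max (outdeg HA w) (outdeg HB w)"
      using HA(1) HB(1) by (intro outdeg_Un_cut[of _ A]) auto
    ultimately show ?thesis unfolding H_def using outdeg_Un_le[of "HA \<union> HB" HF w] by linarith
  qed
  moreover have "walk_guidance R H"
  proof (rule walk_guidance_cut[OF assms(1,2)])
    show "walk_guidance (Restr R A) H"
      by (rule walk_guidance_mono[OF HA(2)]) (auto simp: H_def)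
    show "walk_guidance (Restr R (-A)) H"
      by (rule walk_guidance_mono[OF HB(2)]) (auto simp: H_def)
    show "guides_to R H (colour_class A c j)" if "j \<in> c ` A" for j
      by (rule guides_to_mono[OF T(3)]) (use that in \<open>auto simp: H_def HF_def\<close>)
    show "guides_to R H (common_neighbours R (colour_class A c j) - A)" if "j \<in> c ` A" for j
      by (rule guides_to_mono[OF T(3)]) (use that in \<open>auto simp: H_def HF_def\<close>)
  qed
  ultimately show ?thesis by blast
qed

text \<open>The threshold m is decoupled from the size of W \<inter> V so that the property passes from the
  two sides of a disjoint union to the union.\<close>

definition balanced_family :: "'a set \<Rightarrow> 'a set set \<Rightarrow> bool" where
  "balanced_family V F \<longleftrightarrow> (\<forall>W (m::real). 3/2 \<le> m \<and> m/3 \<le> card (W \<inter> V) \<longrightarrow>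
     (\<exists>X\<in>F. m/3 \<le> card (W \<inter> X) \<and> card (W \<inter> X) \<le> 2*m/3))"

lemma balanced_family_singleton: "balanced_family {x} {{x}}"
  unfolding balanced_family_def
proof (intro allI impI)
  fix W and m :: real
  assume m: "3/2 \<le> m \<and> m/3 \<le> card (W \<inter> {x})"
  have "card (W \<inter> {x}) \<le> 1" by (simp add: card_le_Suc0_iff_eq)
  with m show "\<exists>X\<in>{{x}}. m/3 \<le> card (W \<inter> X) \<and> card (W \<inter> X) \<le> 2*m/3" by simp
qed

lemma balanced_family_union:
  assumes "finite V1" "finite V2" "V1 \<inter> V2 = {}"
    and "balanced_family V1 F1" "balanced_family V2 F2"
  shows "balanced_family (V1 \<union> V2) (insert (V1 \<union> V2) (F1 \<union> F2))"
  unfolding balanced_family_def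
proof (intro allI impI)
  fix W and m :: real
  assume m: "3/2 \<le> m \<and> m/3 \<le> card (W \<inter> (V1 \<union> V2))"
  show "\<exists>X\<in>insert (V1 \<union> V2) (F1 \<union> F2). m/3 \<le> card (W \<inter> X) \<and> card (W \<inter> X) \<le> 2*m/3"
  proof (cases "card (W \<inter> (V1 \<union> V2)) \<le> 2*m/3")
    case True
    with m show ?thesis by blast
  next
    case False
    have "card (W \<inter> (V1 \<union> V2)) = card (W \<inter> V1) + card (W \<inter> V2)"
      using assms(1-3) by (simp add: Int_Un_distrib card_Un_disjoint disjoint_iff)
    with False have "m/3 \<le> card (W \<inter> V1) \<or> m/3 \<le> card (W \<inter> V2)" by linarith
    with m assms(4,5) show ?thesis unfolding balanced_family_def by blast
  qed
qed

lemma balanced_family_split: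
  assumes "balanced_family V F" "finite W" "W \<subseteq> V" "2 \<le> card W"
  obtains X where "X \<in> F"
    "0 < card (W \<inter> X)" "real (card (W \<inter> X)) \<le> 2 * real (card W) / 3"
    "0 < card (W - X)" "real (card (W - X)) \<le> 2 * real (card W) / 3"
proof -
  from assms(3,4) have "3/2 \<le> real (card W) \<and> real (card W) / 3 \<le> card (W \<inter> V)"
    by (simp add: Int_absorb2)
  with assms(1) obtain X where "X \<in> F"
    and "real (card W) / 3 \<le> card (W \<inter> X)" "card (W \<inter> X) \<le> 2 * real (card W) / 3"
    unfolding balanced_family_def by blast
  moreover have "card W = card (W \<inter> X) + card (W - X)"
    using card_Int_Diff[OF assms(2)] .
  ultimately show ?thesis using assms(4) by (intro that[of X]) linarith+
qed

text \<open>The colouring c records the labels at the time X was built: later relabellings only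
  merge labels, so c keeps refining the current labelling, and a join then adds the same
  neighbours outside X to all vertices of a colour class.\<close>

definition labelled_twin_set :: "nat \<Rightarrow> ('a \<times> 'a) set \<Rightarrow> ('a \<Rightarrow> nat) \<Rightarrow> 'a set \<Rightarrow> bool" where
  "labelled_twin_set k E lab X \<longleftrightarrow> (\<exists>c. c ` X \<subseteq> {1..k} \<and> twin_colouring E X c \<and>
     (\<forall>x\<in>X. \<forall>x'\<in>X. c x = c x' \<longrightarrow> lab x = lab x'))"

lemma labelled_twin_set_closed:
  "lab ` X \<subseteq> {1..k} \<Longrightarrow> E \<subseteq> X \<times> X \<Longrightarrow> labelled_twin_set k E lab X"
  unfolding labelled_twin_set_def twin_colouring_def by blast

lemma labelled_twin_set_relabel:
  assumes "labelled_twin_set k E lab X" "\<And>x x'. lab x = lab x' \<Longrightarrow> lab' x = lab' x'"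
  shows "labelled_twin_set k E lab' X"
proof -
  from assms(1) obtain c where "c ` X \<subseteq> {1..k}" "twin_colouring E X c"
      "\<forall>x\<in>X. \<forall>x'\<in>X. c x = c x' \<longrightarrow> lab x = lab x'"
    unfolding labelled_twin_set_def by blast
  with assms(2) show ?thesis unfolding labelled_twin_set_def by blast
qed

lemma labelled_twin_set_Un:
  assumes "labelled_twin_set k E lab X" "\<And>x. x \<in> X \<Longrightarrow> lab' x = lab x" "X \<inter> Domain E' = {}"
  shows "labelled_twin_set k (E \<union> E') lab' X"
proof -
  from assms(1) obtain c where "c ` X \<subseteq> {1..k}" "twin_colouring E X c"
      and same_lab: "\<forall>x\<in>X. \<forall>x'\<in>X. c x = c x' \<longrightarrow> lab x = lab x'"
    unfolding labelled_twin_set_def by blast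
  moreover have "twin_colouring E' X c"
    using assms(3) unfolding twin_colouring_def by blast
  moreover have "\<forall>x\<in>X. \<forall>x'\<in>X. c x = c x' \<longrightarrow> lab' x = lab' x'"
    using same_lab assms(2) by metis
  ultimately show ?thesis unfolding labelled_twin_set_def by (blast intro: twin_colouring_Un)
qed

lemma labelled_twin_set_join:
  assumes "labelled_twin_set k E lab X" "X \<subseteq> V"
  shows "labelled_twin_set k (E \<union> {(x, y). x \<in> V \<and> y \<in> V \<and> P (lab x) (lab y)}) lab X"
proof -
  from assms(1) obtain c where "c ` X \<subseteq> {1..k}" "twin_colouring E X c"
      and same_lab: "\<forall>x\<in>X. \<forall>x'\<in>X. c x = c x' \<longrightarrow> lab x = lab x'"
    unfolding labelled_twin_set_def by blast
  moreover have "twin_colouring {(x, y). x \<in> V \<and> y \<in> V \<and> P (lab x) (lab y)} X c"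
    unfolding twin_colouring_def
  proof (intro ballI impI allI)
    fix x x' y
    assume "x \<in> X" "x' \<in> X" "c x = c x'"
    with same_lab assms(2) have "lab x = lab x'" "x \<in> V" "x' \<in> V" by blast+
    then show "(x, y) \<in> {(x, y). x \<in> V \<and> y \<in> V \<and> P (lab x) (lab y)} \<longleftrightarrow>
        (x', y) \<in> {(x, y). x \<in> V \<and> y \<in> V \<and> P (lab x) (lab y)}" by simp
  qed
  ultimately show ?thesis unfolding labelled_twin_set_def by (blast intro: twin_colouring_Un)
qed

lemma cw_constructible_wellformed:
  "cw_constructible k V E lab \<Longrightarrow> finite V \<and> E \<subseteq> V \<times> V \<and> lab ` V \<subseteq> {1..k}"
  by (induction rule: cw_constructible.induct) auto

lemma labelled_twin_family_union:
  assumes "V1 \<inter> V2 = {}" "E1 \<subseteq> V1 \<times> V1" "E2 \<subseteq> V2 \<times> V2"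
    and "lab1 ` V1 \<subseteq> {1..k}" "lab2 ` V2 \<subseteq> {1..k}"
    and F1: "\<forall>X\<in>F1. X \<subseteq> V1 \<and> labelled_twin_set k E1 lab1 X"
    and F2: "\<forall>X\<in>F2. X \<subseteq> V2 \<and> labelled_twin_set k E2 lab2 X"
  shows "\<forall>X\<in>insert (V1 \<union> V2) (F1 \<union> F2). X \<subseteq> V1 \<union> V2 \<and>
    labelled_twin_set k (E1 \<union> E2) (\<lambda>x. if x \<in> V1 then lab1 x else lab2 x) X"
proof -
  let ?lab = "\<lambda>x. if x \<in> V1 then lab1 x else lab2 x"
  have "labelled_twin_set k (E1 \<union> E2) ?lab X" if "X \<in> F1" for X
  proof (rule labelled_twin_set_Un)
    show "labelled_twin_set k E1 lab1 X" using F1 that by blast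
    show "X \<inter> Domain E2 = {}" using F1 that assms(1,3) by blast
  qed (use F1 that in auto)
  moreover have "labelled_twin_set k (E2 \<union> E1) ?lab X" if "X \<in> F2" for X
  proof (rule labelled_twin_set_Un)
    show "labelled_twin_set k E2 lab2 X" using F2 that by blast
    show "X \<inter> Domain E1 = {}" using F2 that assms(1,2) by blast
  qed (use F2 that assms(1) in auto)
  moreover have "labelled_twin_set k (E1 \<union> E2) ?lab (V1 \<union> V2)"
    using assms(2-5) by (intro labelled_twin_set_closed) auto
  ultimately show ?thesis using F1 F2 by (auto simp: Un_commute)
qed

lemma cw_constructible_twin_family:
  assumes "cw_constructible k V E lab"
  shows "\<exists>F. balanced_family V F \<and> (\<forall>X\<in>F. X \<subseteq> V \<and> labelled_twin_set k E lab X)"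
  using assms
proof induction
  case (single lab x)
  have "labelled_twin_set k {} lab {x}"
    using single by (intro labelled_twin_set_closed) auto
  with balanced_family_singleton show ?case by (intro exI[of _ "{{x}}"]) simp
next
  case (union V1 E1 lab1 V2 E2 lab2)
  obtain F1 F2 where F1: "balanced_family V1 F1" "\<forall>X\<in>F1. X \<subseteq> V1 \<and> labelled_twin_set k E1 lab1 X"
    and F2: "balanced_family V2 F2" "\<forall>X\<in>F2. X \<subseteq> V2 \<and> labelled_twin_set k E2 lab2 X"
    using union.IH by blast
  have wf: "finite V1" "E1 \<subseteq> V1 \<times> V1" "lab1 ` V1 \<subseteq> {1..k}"
      "finite V2" "E2 \<subseteq> V2 \<times> V2" "lab2 ` V2 \<subseteq> {1..k}"
    using cw_constructible_wellformed[OF union.hyps(1)] cw_constructible_wellformed[OF union.hyps(2)]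
    by blast+
  show ?case
    using balanced_family_union[OF wf(1,4) union.hyps(3) F1(1) F2(1)]
      labelled_twin_family_union[OF union.hyps(3) wf(2,5,3,6) F1(2) F2(2)] by blast
next
  case (relabel V E lab i j)
  then obtain F where F: "balanced_family V F" "\<forall>X\<in>F. X \<subseteq> V \<and> labelled_twin_set k E lab X"
    by blast
  have "labelled_twin_set k E (\<lambda>x. if lab x = i then j else lab x) X" if "X \<in> F" for X
    by (rule labelled_twin_set_relabel[of k E lab]) (use F(2) that in auto)
  with F show ?case by blast
next
  case (join V E lab i j)
  then obtain F where F: "balanced_family V F" "\<forall>X\<in>F. X \<subseteq> V \<and> labelled_twin_set k E lab X"
    by blast
  have "labelled_twin_set k (E \<union> {(x, y). x \<in> V \<and> y \<in> V \<and>
      (lab x = i \<and> lab y = j \<or> lab x = j \<and> lab y = i)}) lab X" if "X \<in> F" for X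
    using labelled_twin_set_join[where P = "\<lambda>a b. a = i \<and> b = j \<or> a = j \<and> b = i"] F(2) that
    by blast
  with F show ?case by blast
qed

lemma cw_at_most_balanced_twin_family:
  assumes "cw_at_most k V E"
  shows "\<exists>F. balanced_family V F \<and> (\<forall>X\<in>F. \<exists>c. c ` X \<subseteq> {1..k} \<and> twin_colouring E X c)"
proof -
  from assms obtain lab where "cw_constructible k V E lab" unfolding cw_at_most_def by blast
  with cw_constructible_twin_family obtain F where "balanced_family V F"
    and F: "\<forall>X\<in>F. X \<subseteq> V \<and> labelled_twin_set k E lab X" by blast
  moreover have "\<exists>c. c ` X \<subseteq> {1..k} \<and> twin_colouring E X c" if "X \<in> F" for X
  proof -
    from F that have "labelled_twin_set k E lab X" by blast
    then show ?thesis unfolding labelled_twin_set_def by auto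
  qed
  ultimately show ?thesis by blast
qed

lemma log_budget_step:
  assumes "d \<le> 2 * real k * log (3/2) a" "0 < a" "a \<le> 2 * m / 3"
  shows "d + 2 * real k \<le> 2 * real k * log (3/2) m"
proof -
  have "log (3/2) a \<le> log (3/2) (m / (3/2))" using assms(2,3) by simp
  also have "\<dots> = log (3/2) m - 1" using assms(2,3) by (subst log_divide) auto
  finally have "2 * real k * log (3/2) a \<le> 2 * real k * (log (3/2) m - 1)"
    by (simp add: mult_left_mono)
  with assms(1) show ?thesis by (simp add: algebra_simps)
qed

lemma irrefl_Restr_card_le_1:
  assumes "irrefl E" "finite W" "card W \<le> 1"
  shows "Restr E W = {}"
proof (rule equals0I)
  fix p assume "p \<in> Restr E W"
  then obtain x y where "p = (x, y)" "(x, y) \<in> E" "x \<in> W" "y \<in> W" by blast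
  moreover have "\<forall>a\<in>W. \<forall>b\<in>W. a = b"
    using assms(3) card_le_Suc0_iff_eq[OF assms(2)] by simp
  ultimately have "(x, x) \<in> E" by metis
  with assms(1) show False unfolding irrefl_def by blast
qed

lemma walk_guidance_split_step:
  fixes k :: nat
  assumes "sym E" "c ` X \<subseteq> {1..k}" "twin_colouring E X c"
    and sizes: "0 < card (W \<inter> X)" "real (card (W \<inter> X)) \<le> 2 * real (card W) / 3"
      "0 < card (W - X)" "real (card (W - X)) \<le> 2 * real (card W) / 3"
    and HA: "HA \<subseteq> Restr E (W \<inter> X)" "\<forall>w. outdeg HA w \<le> 2 * real k * log (3/2) (card (W \<inter> X))"
      "walk_guidance (Restr E (W \<inter> X)) HA"
    and HB: "HB \<subseteq> Restr E (W - X)" "\<forall>w. outdeg HB w \<le> 2 * real k * log (3/2) (card (W - X))"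
      "walk_guidance (Restr E (W - X)) HB"
  shows "\<exists>H \<subseteq> Restr E W. (\<forall>w. outdeg H w \<le> 2 * real k * log (3/2) (card W))
    \<and> walk_guidance (Restr E W) H"
proof -
  define A where "A = W \<inter> X"
  have cut: "Restr (Restr E W) A = Restr E (W \<inter> X)" "Restr (Restr E W) (-A) = Restr E (W - X)"
    unfolding A_def by blast+
  have "sym (Restr E W)" using assms(1) unfolding sym_def by blast
  moreover have "twin_colouring (Restr E W) A c"
    unfolding A_def by (rule twin_colouring_restrict[OF assms(3)])
  moreover have "c ` A \<subseteq> {1..k}" using assms(2) unfolding A_def by blast
  then have "finite (c ` A)" and colours: "card (c ` A) \<le> k"
    using finite_subset card_mono[of "{1..k}" "c ` A"] by auto
  ultimately obtain H where H: "H \<subseteq> Restr E W" "walk_guidance (Restr E W) H"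
      "\<And>w. outdeg H w \<le> max (outdeg HA w) (outdeg HB w) + 2 * card (c ` A)"
    using walk_guidance_combine[of "Restr E W" A c HA HB, unfolded cut] HA(1,3) HB(1,3) by blast
  have "outdeg H w \<le> 2 * real k * log (3/2) (card W)" for w
  proof -
    have "outdeg HA w + 2 * real k \<le> 2 * real k * log (3/2) (card W)"
      "outdeg HB w + 2 * real k \<le> 2 * real k * log (3/2) (card W)"
      using HA(2) HB(2) sizes by (auto intro: log_budget_step)
    with H(3)[of w] colours show ?thesis by (simp add: of_nat_max)
  qed
  with H show ?thesis by blast
qed

lemma walk_guidance_exists:
  fixes k :: nat
  assumes "sym E" "irrefl E" "balanced_family V F"
    and twins: "\<forall>X\<in>F. \<exists>c. c ` X \<subseteq> {1..k} \<and> twin_colouring E X c"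
    and "finite W" "W \<subseteq> V"
  shows "\<exists>H \<subseteq> Restr E W. (\<forall>w. outdeg H w \<le> 2 * real k * log (3/2) (card W))
    \<and> walk_guidance (Restr E W) H"
  using assms(5,6)
proof (induction "card W" arbitrary: W rule: less_induct)
  case less
  show ?case
  proof (cases "card W \<le> 1")
    case True
    with \<open>irrefl E\<close> \<open>finite W\<close> have "Restr E W = {}" by (rule irrefl_Restr_card_le_1)
    moreover from True have "log (3/2) (card W) = 0"
      by (cases "card W") (auto simp: log_def)
    ultimately show ?thesis
      by (intro exI[of _ "{}"]) (simp add: outdeg_def walk_guidance_empty)
  next
    case False
    with \<open>balanced_family V F\<close> less.prems obtain X where "X \<in> F"
      and sizes: "0 < card (W \<inter> X)" "real (card (W \<inter> X)) \<le> 2 * real (card W) / 3"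
        "0 < card (W - X)" "real (card (W - X)) \<le> 2 * real (card W) / 3"
      by (elim balanced_family_split) auto
    from bspec[OF twins this(1)] obtain c where "c ` X \<subseteq> {1..k}" "twin_colouring E X c"
      by blast
    moreover have "card (W \<inter> X) < card W" "card (W - X) < card W"
      using sizes False by linarith+
    moreover have "finite (W \<inter> X)" "W \<inter> X \<subseteq> V" "finite (W - X)" "W - X \<subseteq> V"
      using less.prems by auto
    ultimately obtain HA HB where
      "HA \<subseteq> Restr E (W \<inter> X)" "\<forall>w. outdeg HA w \<le> 2 * real k * log (3/2) (card (W \<inter> X))"
      "walk_guidance (Restr E (W \<inter> X)) HA"
      "HB \<subseteq> Restr E (W - X)" "\<forall>w. outdeg HB w \<le> 2 * real k * log (3/2) (card (W - X))"
      "walk_guidance (Restr E (W - X)) HB"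
      using less.hyps by meson
    with \<open>c ` X \<subseteq> {1..k}\<close> \<open>twin_colouring E X c\<close>
    show ?thesis using \<open>sym E\<close> sizes by (intro walk_guidance_split_step)
  qed
qed

lemma cw_at_most_walk_guidance:
  fixes k :: nat
  assumes "simple_graph V E" "cw_at_most k V E"
  shows "\<exists>H \<subseteq> E. walk_guidance E H \<and> (\<forall>w. outdeg H w \<le> 2 * real k * log (3/2) (card V))"
proof -
  from assms(1) have "sym E" "irrefl E" "finite V" and E: "Restr E V = E"
    unfolding simple_graph_def by auto
  from cw_at_most_balanced_twin_family[OF assms(2)] obtain F where "balanced_family V F"
    and "\<forall>X\<in>F. \<exists>c. c ` X \<subseteq> {1..k} \<and> twin_colouring E X c" by blast
  from walk_guidance_exists[OF \<open>sym E\<close> \<open>irrefl E\<close> this \<open>finite V\<close> order_refl]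
  show ?thesis unfolding E by blast
qed

theorem corollary35:
  "\<exists>C::real. C > 0 \<and>
     (\<forall>(k::nat) (n::nat) (V::nat set) E.
        simple_graph V E \<and> card V = n \<and> n \<ge> 1 \<and> cw_at_most k V E \<longrightarrow>
        (\<exists>H. partial_orientation E H \<and> weak_inf_guidance V E H \<and>
             (\<forall>u\<in>V. real (outdeg H u) \<le> C * real k * ln (real n))))"
proof (intro exI[of _ "2 / ln (3/2)"] conjI allI impI)
  fix k n :: nat and V :: "nat set" and E
  assume G: "simple_graph V E \<and> card V = n \<and> n \<ge> 1 \<and> cw_at_most k V E"
  then obtain H where "H \<subseteq> E" "walk_guidance E H"
    and bound: "\<forall>w. outdeg H w \<le> 2 * real k * log (3/2) n"
    using cw_at_most_walk_guidance[of V E k] by blast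
  have "weak_inf_guidance V E H"
    using \<open>H \<subseteq> E\<close> \<open>walk_guidance E H\<close> by (rule walk_guidance_imp_weak_inf_guidance)
  moreover have "2 * real k * log (3/2) n = 2 / ln (3/2) * real k * ln n"
    by (simp add: log_def)
  ultimately show "\<exists>H. partial_orientation E H \<and> weak_inf_guidance V E H \<and>
      (\<forall>u\<in>V. real (outdeg H u) \<le> 2 / ln (3/2) * real k * ln (real n))"
    using \<open>H \<subseteq> E\<close> bound unfolding partial_orientation_def by (intro exI[of _ H]) simp
qed simp

end
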